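(* Let $k\ge 2$, $w=2^k-1$, $v=2^{k-1}$. For $j\ge1$ let $\tilde U_j^R$ be the sequence of jump lengths consisting of one jump of length $2^j+2^{j-1}-1$ followed by $2^j-1$ jumps of length $1$. Consider a line of $w$ cells indexed $0,\dots,w-1$, all empty except one cell with even index $p\in\{0,2,\dots,w-1\}$ (arbitrary), on which the frog stands. Then for the fixed sequence $\tilde U_1^R,\tilde U_2^R,\dots,\tilde U_{k-1}^R$ there is a valid execution that visits every cell of the line exactly once and ends with the frog on the center cell $v-1$.
   Context: A frog on a line of cells performs a given sequence of positive jump lengths; for each jump it chooses a direction, moving from position $q$ to $q+J$ or $q-J$. An execution is valid if every landing cell lies on the line, is not blocked, and has not been visited before (the starting cell counts as visited). Cells are indexed from $0$. *)

theory Defs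
  imports Main
begin

fun frog_path :: "int \<Rightarrow> nat list \<Rightarrow> bool list \<Rightarrow> int list" where
  "frog_path q (J # js) (d # ds) = q # frog_path (if d then q + int J else q - int J) js ds"
| "frog_path q _ _ = [q]"

definition valid_execution :: "nat \<Rightarrow> int set \<Rightarrow> int \<Rightarrow> nat list \<Rightarrow> bool list \<Rightarrow> bool" where
  "valid_execution n B q js ds \<longleftrightarrow>
     length ds = length js \<and>
     (\<forall>x \<in> set (tl (frog_path q js ds)). 0 \<le> x \<and> x < int n \<and> x \<notin> B) \<and>
     distinct (frog_path q js ds)"

definition U_R :: "nat \<Rightarrow> nat list" where
  "U_R j = [2^j + 2^(j-1) - 1] @ replicate (2^j - 1) 1"

end

theory Submission
  imports Defs
begin

text \<open>The line of \<open>2\<^sup>k\<^sup>+\<^sup>1 - 1\<close> cells consists of two lines of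
  \<open>2\<^sup>k - 1\<close> cells and the middle cell \<open>2\<^sup>k - 1\<close> between them. Since \<open>2\<^sup>k - 1\<close> is odd, an
  even start lies in one of the two halves; by the mirror symmetry of the line we may assume it is
  the left one. By induction the blocks \<open>\<tilde>U\<^sub>1\<^sup>R, \<dots>, \<tilde>U\<^sub>k\<^sub>-\<^sub>1\<^sup>R\<close> cover the left half and end
  at its centre. The long jump of \<open>\<tilde>U\<^sub>k\<^sup>R\<close> then leads to the last cell of the line, and its
  unit jumps sweep leftwards through the right half to the middle cell, the centre of the line.\<close>

definition frog_tour :: "int set \<Rightarrow> int \<Rightarrow> nat list \<Rightarrow> bool list \<Rightarrow> int \<Rightarrow> bool" where
  "frog_tour S q js ds e \<longleftrightarrow>
     length ds = length js \<and> distinct (frog_path q js ds) \<and>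
     set (frog_path q js ds) = S \<and> last (frog_path q js ds) = e"

lemma frog_path_eq_Cons_tl: "frog_path q js ds = q # tl (frog_path q js ds)"
  by (cases js; cases ds) auto

lemma frog_path_ne_Nil [simp]: "frog_path q js ds \<noteq> []"
  by (subst frog_path_eq_Cons_tl) simp

lemma frog_path_append:
  assumes "length ds = length js"
  shows "frog_path q (js @ js') (ds @ ds') =
           frog_path q js ds @ tl (frog_path (last (frog_path q js ds)) js' ds')"
  using assms
proof (induction js arbitrary: ds q)
  case Nil
  then show ?case by (subst frog_path_eq_Cons_tl) simp
next
  case (Cons J js)
  then obtain d ds0 where "ds = d # ds0" "length ds0 = length js"
    by (cases ds) auto
  with Cons.IH show ?case
    by simp
qed

lemma frog_path_reflect:
  "frog_path (c - q) js (map Not ds) = map (\<lambda>x. c - x) (frog_path q js ds)"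
  by (induction q js ds arbitrary: c rule: frog_path.induct) (auto simp: algebra_simps)

lemma frog_path_unit_steps_left:
  "frog_path q (replicate n 1) (replicate n False) = rev [q - int n..q]"
proof (induction n arbitrary: q)
  case 0
  then show ?case by simp
next
  case (Suc n)
  have "[q - int (Suc n)..q] = [q - 1 - int n..q - 1] @ [q]"
    using upto_rec2[of "q - int (Suc n)" q] by (simp add: algebra_simps)
  then show ?case
    using Suc.IH[of "q - 1"] by simp
qed

lemma frog_tour_append:
  assumes "frog_tour S q js ds e" and "frog_tour T e js' ds' f" and "S \<inter> T = {e}"
  shows "frog_tour (S \<union> T) q (js @ js') (ds @ ds') f"
proof -
  let ?P = "frog_path q js ds"
  obtain Q where Q_def: "frog_path e js' ds' = e # Q"
    using frog_path_eq_Cons_tl by blast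
  have P: "length ds = length js" "distinct ?P" "set ?P = S" "last ?P = e"
    using assms(1) unfolding frog_tour_def by auto
  have Q: "length ds' = length js'" "distinct (e # Q)" "set (e # Q) = T" "last (e # Q) = f"
    using assms(2) unfolding frog_tour_def Q_def by auto
  have path: "frog_path q (js @ js') (ds @ ds') = ?P @ Q"
    using frog_path_append[OF P(1)] P(4) Q_def by simp
  have "e \<in> S"
    using P(3,4) last_in_set[of ?P] by simp
  then have "set (?P @ Q) = S \<union> T"
    using P(3) Q(3) by auto
  moreover have "distinct (?P @ Q)"
    using P(2,3) Q(2,3) assms(3) by auto
  moreover have "last (?P @ Q) = f"
    using P(4) Q(4) by (cases "Q = []") auto
  moreover have "length (ds @ ds') = length (js @ js')"
    using P(1) Q(1) by simp
  ultimately show ?thesis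
    unfolding frog_tour_def path by blast
qed

lemma frog_tour_reflect:
  assumes "frog_tour S q js ds e"
  shows "frog_tour ((\<lambda>x. c - x) ` S) (c - q) js (map Not ds) (c - e)"
  using assms unfolding frog_tour_def frog_path_reflect
  by (auto simp: distinct_map inj_on_def last_map)

lemma frog_tour_jump_right:
  assumes "q < t" and "int J = t - q"
  shows "frog_tour {q, t} q [J] [True] t"
  using assms unfolding frog_tour_def by auto

lemma frog_tour_unit_steps_left:
  "frog_tour {q - int n..q} q (replicate n 1) (replicate n False) (q - int n)"
  unfolding frog_tour_def frog_path_unit_steps_left
  by (auto simp: last_rev upto_rec1)

lemma concat_U_R_Suc:
  "concat (map U_R [1..<Suc k]) = concat (map U_R [1..<k]) @ U_R k" if "k \<ge> 1"
  using that by simp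

lemma frog_tour_U_R:
  fixes k :: nat
  assumes "k \<ge> 1"
  defines "w \<equiv> (2::int) ^ k" and "v \<equiv> (2::int) ^ (k - 1)"
  shows "frog_tour ({v - 1} \<union> {w - 1..2 * w - 2}) (v - 1) (U_R k)
           (True # replicate (2 ^ k - 1) False) (w - 1)"
proof -
  have w: "w = 2 * v" "v \<ge> 1"
    using assms unfolding w_def v_def by (cases k) auto
  have jump: "int (2 ^ k + 2 ^ (k - 1) - 1) = w + v - 1"
    unfolding w_def v_def by (simp add: of_nat_diff add_increasing)
  have steps: "int (2 ^ k - 1) = w - 1"
    unfolding w_def by (simp add: of_nat_diff)
  have "frog_tour ({v - 1, 2 * w - 2} \<union> {w - 1..2 * w - 2}) (v - 1)
          ([2 ^ k + 2 ^ (k - 1) - 1] @ replicate (2 ^ k - 1) 1)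
          ([True] @ replicate (2 ^ k - 1) False) (w - 1)"
  proof (rule frog_tour_append)
    show "frog_tour {v - 1, 2 * w - 2} (v - 1) [2 ^ k + 2 ^ (k - 1) - 1] [True] (2 * w - 2)"
      by (rule frog_tour_jump_right) (use w jump in linarith)+
    show "frog_tour {w - 1..2 * w - 2} (2 * w - 2) (replicate (2 ^ k - 1) 1)
            (replicate (2 ^ k - 1) False) (w - 1)"
      using frog_tour_unit_steps_left[of "2 * w - 2" "2 ^ k - 1"] steps by simp
    show "{v - 1, 2 * w - 2} \<inter> {w - 1..2 * w - 2} = {2 * w - 2}"
      using w by auto
  qed
  moreover have "{v - 1, 2 * w - 2} \<union> {w - 1..2 * w - 2} = {v - 1} \<union> {w - 1..2 * w - 2}"
    using w by auto
  ultimately show ?thesis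
    unfolding U_R_def by (simp only: append_Cons append_Nil)
qed

lemma frog_tour_concat_U_R:
  fixes k :: nat and p :: int
  assumes "k \<ge> 1" and "even p" and "0 \<le> p" and "p < 2 ^ k - 1"
  shows "\<exists>ds. frog_tour {0..<2 ^ k - 1} p (concat (map U_R [1..<k])) ds (2 ^ (k - 1) - 1)"
  using assms
proof (induction k arbitrary: p rule: nat_induct_at_least)
  case base
  then have "p = 0"
    by simp
  then show ?case
    by (intro exI[of _ "[]"]) (auto simp: frog_tour_def)
next
  case (Suc k)
  define w :: int where "w = 2 ^ k"
  define v :: int where "v = 2 ^ (k - 1)"
  let ?js = "concat (map U_R [1..<Suc k])"
  have w: "w = 2 * v" "v \<ge> 1"
    using Suc.hyps unfolding w_def v_def by (cases k) auto
  have size: "(2::int) ^ Suc k - 1 = 2 * w - 1" "(2::int) ^ (Suc k - 1) - 1 = w - 1"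
    unfolding w_def by simp_all
  have block: "frog_tour ({v - 1} \<union> {w - 1..2 * w - 2}) (v - 1) (U_R k)
                 (True # replicate (2 ^ k - 1) False) (w - 1)"
    using frog_tour_U_R[OF Suc.hyps] unfolding w_def v_def .
  have left_half: "\<exists>ds. frog_tour {0..<2 * w - 1} q ?js ds (w - 1)"
    if "even q" "0 \<le> q" "q < w - 1" for q
  proof -
    have "q < 2 ^ k - 1"
      using that(3) unfolding w_def .
    with Suc.IH[OF that(1,2)]
    obtain ds where tour: "frog_tour {0..<w - 1} q (concat (map U_R [1..<k])) ds (v - 1)"
      unfolding w_def v_def by blast
    have "{0..<w - 1} \<inter> ({v - 1} \<union> {w - 1..2 * w - 2}) = {v - 1}"
      using w by auto
    from frog_tour_append[OF tour block this]
    have "frog_tour ({0..<w - 1} \<union> ({v - 1} \<union> {w - 1..2 * w - 2})) q ?js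
            (ds @ True # replicate (2 ^ k - 1) False) (w - 1)"
      unfolding concat_U_R_Suc[OF Suc.hyps] .
    moreover have "{0..<w - 1} \<union> ({v - 1} \<union> {w - 1..2 * w - 2}) = {0..<2 * w - 1}"
      using w by auto
    ultimately show ?thesis
      by (intro exI) simp
  qed
  have p: "p < 2 * w - 1"
    using Suc.prems(3) unfolding size .
  have "\<exists>ds. frog_tour {0..<2 * w - 1} p ?js ds (w - 1)"
  proof (cases "p < w - 1")
    case True
    then show ?thesis
      using left_half[OF Suc.prems(1,2)] by blast
  next
    case False
    \<comment> \<open>\<open>w - 1\<close> is odd, so \<open>p\<close> lies in the right half and its mirror image in the left one\<close>
    with Suc.prems(1) w(1) have "p \<ge> w"
      by presburger
    with Suc.prems(1) p have "even (2 * w - 2 - p)" "0 \<le> 2 * w - 2 - p" "2 * w - 2 - p < w - 1"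
      by auto
    then obtain ds where "frog_tour {0..<2 * w - 1} (2 * w - 2 - p) ?js ds (w - 1)"
      using left_half by blast
    then have "frog_tour ((\<lambda>x. 2 * w - 2 - x) ` {0..<2 * w - 1}) (2 * w - 2 - (2 * w - 2 - p))
                 ?js (map Not ds) (2 * w - 2 - (w - 1))"
      by (rule frog_tour_reflect)
    moreover have "(\<lambda>x. 2 * w - 2 - x) ` {0..<2 * w - 1} = {0..<2 * w - 1}"
      by (auto simp: image_iff)
    moreover have "2 * w - 2 - (2 * w - 2 - p) = p" "2 * w - 2 - (w - 1) = w - 1"
      by simp_all
    ultimately show ?thesis
      by (metis (no_types))
  qed
  then show ?case
    unfolding size .
qed

theorem mainTheorem8:
  fixes k p :: nat
  assumes "k \<ge> 2" and "even p" and "p < 2^k - 1"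
  shows "\<exists>ds. valid_execution (2^k - 1) {} (int p) (concat (map U_R [1..<k])) ds \<and>
              set (frog_path (int p) (concat (map U_R [1..<k])) ds) = {0..<int (2^k - 1)} \<and>
              last (frog_path (int p) (concat (map U_R [1..<k])) ds) = int (2^(k-1)) - 1"
proof -
  have cells: "int (2 ^ k - 1) = 2 ^ k - 1"
    by (simp add: of_nat_diff)
  obtain ds where
    "frog_tour {0..<2 ^ k - 1} (int p) (concat (map U_R [1..<k])) ds (2 ^ (k - 1) - 1)"
    using frog_tour_concat_U_R[of k "int p"] assms cells by auto
  then show ?thesis
    unfolding valid_execution_def frog_tour_def cells
    by (fastforce dest: list.set_sel(2)[OF frog_path_ne_Nil])
qed

end
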